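(* If $A\in G$ fixes $Q$, then for any $a,b\in\mathrm{supp}\,Q$, $\langle Ab,a\rangle\ne0$ implies $a=b$ or $a$ $Q$-dominates $b$.
   Context: $\Gamma$ is a finite simplicial graph with vertex set $X$, $|X|=2g$, $A_\Gamma$ its right-angled Artin group, $H_\Gamma$ its abelianization, $\langle-,-\rangle$ the inner product on $H_\Gamma$ making the images of $X$ orthonormal; letters of $L=X\cup X^{-1}$ also denote their images in $H_\Gamma$; $\bar u\in X$ is the vertex of $u\in L$. $\mathrm{lk}(v)$ = neighbours, $\mathrm{st}(v)=\mathrm{lk}(v)\cup\{v\}$; $v\ge w$ iff $\mathrm{lk}(w)\subset\mathrm{st}(v)$, extended to letters via vertices. Fix a bijection $u\mapsto u^*$ of $L$ with $(u^* )^*=u^{-1}$ and letters $a_1,\dots,a_g$ whose vertices with those of $a_1^*,\dots,a_g^*$ are all of $X$; $Q=\sum\{[a_i]\wedge[a_i^*]:\bar a_i^*\text{ adjacent to }\bar a_i\}\in\Lambda^2H_\Gamma$, assumed nonzero, with diagonal action of $\mathrm{Aut}\,H_\Gamma$. $\mathrm{supp}\,Q$ = set of vertices appearing in $Q$. $G\le\mathrm{Aut}\,H_\Gamma$ is generated by the maps $E_{a,b}$ ($a\in X$, $b\in\mathrm{supp}\,Q$, $a\ge b$, $a\ne b$; $b\mapsto b+a$, other basis vectors fixed) and $N_b$ ($b\in\mathrm{supp}\,Q$; $b\mapsto -b$, others fixed). $Q$-domination on $\mathrm{supp}\,Q$: $a$ $Q$-dominates $b$ if either $a\ne\bar{b^*}$,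 $a\ge b$ and $b^*\ge a^*$; or $a=\bar{b^*}$ and $a\ge b$. *)

theory Defs
  imports Main
begin

(* Vertices: a finite type 'v (so X = UNIV).  H_Gamma = Z^X is modelled as 'v => int,
   the vertex x corresponding to the basis vector bvec x. *)

type_synonym 'v letter = "'v \<times> bool"   (* (x, True) = x,  (x, False) = x^{-1} *)

definition lk :: "('v \<Rightarrow> 'v \<Rightarrow> bool) \<Rightarrow> 'v \<Rightarrow> 'v set" where
  "lk adj v = {w. adj v w}"

definition st :: "('v \<Rightarrow> 'v \<Rightarrow> bool) \<Rightarrow> 'v \<Rightarrow> 'v set" where
  "st adj v = insert v (lk adj v)"

definition dom_geq :: "('v \<Rightarrow> 'v \<Rightarrow> bool) \<Rightarrow> 'v \<Rightarrow> 'v \<Rightarrow> bool" where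
  "dom_geq adj v w \<longleftrightarrow> lk adj w \<subseteq> st adj v"

definition bvec :: "'v \<Rightarrow> 'v \<Rightarrow> int" where
  "bvec x = (\<lambda>y. if y = x then 1 else 0)"

definition lvec :: "'v letter \<Rightarrow> 'v \<Rightarrow> int" where
  "lvec u = (\<lambda>y. if y = fst u then (if snd u then 1 else -1) else 0)"

definition linv :: "'v letter \<Rightarrow> 'v letter" where
  "linv u = (fst u, \<not> snd u)"

definition ip :: "('v::finite \<Rightarrow> int) \<Rightarrow> ('v \<Rightarrow> int) \<Rightarrow> int" where
  "ip h k = (\<Sum>x\<in>UNIV. h x * k x)"

(* Lambda^2 H_Gamma modelled faithfully as antisymmetric integer tensors:
   u \<and> w  |->  (x,y) |-> u x * w y - u y * w x *)
definition wedge :: "('v \<Rightarrow> int) \<Rightarrow> ('v \<Rightarrow> int) \<Rightarrow> 'v \<Rightarrow> 'v \<Rightarrow> int" where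
  "wedge u w = (\<lambda>x y. u x * w y - u y * w x)"

(* A applied diagonally to Q = sum of [a_i] wedge [star a_i] over i with adjacent vertices *)
definition Qact ::
  "('v \<Rightarrow> 'v \<Rightarrow> bool) \<Rightarrow> ('v letter \<Rightarrow> 'v letter) \<Rightarrow> (nat \<Rightarrow> 'v letter) \<Rightarrow> nat
     \<Rightarrow> (('v \<Rightarrow> int) \<Rightarrow> ('v \<Rightarrow> int)) \<Rightarrow> 'v \<Rightarrow> 'v \<Rightarrow> int" where
  "Qact adj star a g A = (\<lambda>x y. \<Sum>i\<in>{i. i < g \<and> adj (fst (a i)) (fst (star (a i)))}.
       wedge (A (lvec (a i))) (A (lvec (star (a i)))) x y)"

definition Qform ::
  "('v \<Rightarrow> 'v \<Rightarrow> bool) \<Rightarrow> ('v letter \<Rightarrow> 'v letter) \<Rightarrow> (nat \<Rightarrow> 'v letter) \<Rightarrow> nat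
     \<Rightarrow> 'v \<Rightarrow> 'v \<Rightarrow> int" where
  "Qform adj star a g = Qact adj star a g id"

definition suppQ ::
  "('v \<Rightarrow> 'v \<Rightarrow> bool) \<Rightarrow> ('v letter \<Rightarrow> 'v letter) \<Rightarrow> (nat \<Rightarrow> 'v letter) \<Rightarrow> nat \<Rightarrow> 'v set" where
  "suppQ adj star a g = {x. \<exists>i<g. adj (fst (a i)) (fst (star (a i))) \<and>
                              (x = fst (a i) \<or> x = fst (star (a i)))}"

(* transvection E_{a,b}: b |-> b + a, other basis vectors fixed *)
definition Etr :: "'v \<Rightarrow> 'v \<Rightarrow> ('v \<Rightarrow> int) \<Rightarrow> 'v \<Rightarrow> int" where
  "Etr p q h = (\<lambda>x. h x + (if x = p then h q else 0))"

definition Etr_inv :: "'v \<Rightarrow> 'v \<Rightarrow> ('v \<Rightarrow> int) \<Rightarrow> 'v \<Rightarrow> int" where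
  "Etr_inv p q h = (\<lambda>x. h x - (if x = p then h q else 0))"

definition Ninv :: "'v \<Rightarrow> ('v \<Rightarrow> int) \<Rightarrow> 'v \<Rightarrow> int" where
  "Ninv q h = (\<lambda>x. if x = q then - h x else h x)"

inductive_set Ggrp ::
  "('v \<Rightarrow> 'v \<Rightarrow> bool) \<Rightarrow> ('v letter \<Rightarrow> 'v letter) \<Rightarrow> (nat \<Rightarrow> 'v letter) \<Rightarrow> nat
     \<Rightarrow> (('v \<Rightarrow> int) \<Rightarrow> ('v \<Rightarrow> int)) set"
  for adj star a g where
  G_id: "id \<in> Ggrp adj star a g"
| G_E: "\<lbrakk>A \<in> Ggrp adj star a g; q \<in> suppQ adj star a g; dom_geq adj p q; p \<noteq> q\<rbrakk>
        \<Longrightarrow> Etr p q \<circ> A \<in> Ggrp adj star a g"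
| G_Einv: "\<lbrakk>A \<in> Ggrp adj star a g; q \<in> suppQ adj star a g; dom_geq adj p q; p \<noteq> q\<rbrakk>
        \<Longrightarrow> Etr_inv p q \<circ> A \<in> Ggrp adj star a g"
| G_N: "\<lbrakk>A \<in> Ggrp adj star a g; q \<in> suppQ adj star a g\<rbrakk>
        \<Longrightarrow> Ninv q \<circ> A \<in> Ggrp adj star a g"

definition vstar :: "('v letter \<Rightarrow> 'v letter) \<Rightarrow> 'v \<Rightarrow> 'v" where
  "vstar star b = fst (star (b, True))"

definition Qdom :: "('v \<Rightarrow> 'v \<Rightarrow> bool) \<Rightarrow> ('v letter \<Rightarrow> 'v letter) \<Rightarrow> 'v \<Rightarrow> 'v \<Rightarrow> bool" where
  "Qdom adj star p q \<longleftrightarrow>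
     (p \<noteq> vstar star q \<and> dom_geq adj p q \<and> dom_geq adj (vstar star q) (vstar star p))
     \<or> (p = vstar star q \<and> dom_geq adj p q)"

end

theory Submission
  imports Defs
begin

text \<open>
  A map in G is invertible, and both it and its inverse are triangular with respect to the
  domination order: an entry \<open>\<langle>C s, r\<rangle>\<close> can only be nonzero if \<open>r \<ge> s\<close>.
  If \<open>A\<close> fixes \<open>Q\<close> then \<open>A Q A\<^sup>T = Q\<close>, hence \<open>Q A\<^sup>T = A\<^sup>-\<^sup>1 Q\<close>.  Row \<open>q\<^sup>*\<close> of \<open>Q\<close> is
  concentrated in column \<open>q\<close> and column \<open>p\<close> in row \<open>p\<^sup>*\<close>, so the \<open>(q\<^sup>*, p)\<close> entry of this
  identity reads \<open>Q(q\<^sup>*,q) \<langle>Aq,p\<rangle> = Q(p\<^sup>*,p) \<langle>A\<^sup>-\<^sup>1 p\<^sup>*, q\<^sup>*\<rangle>\<close>.  Thus \<open>\<langle>Aq,p\<rangle> \<noteq> 0\<close> forces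
  \<open>p \<ge> q\<close> and \<open>q\<^sup>* \<ge> p\<^sup>*\<close>, which is Q-domination.
\<close>

lemma sum_UNIV_single:
  fixes f :: "'v::finite \<Rightarrow> 'b::comm_monoid_add"
  assumes "\<And>y. y \<noteq> c \<Longrightarrow> f y = 0"
  shows "(\<Sum>y\<in>UNIV. f y) = f c"
  using assms sum.remove[OF finite_UNIV, of c f] by (simp add: sum.neutral)

lemma sum_times_bvec [simp]: "(\<Sum>y\<in>UNIV. f y * bvec z y) = (f (z::'v::finite) :: int)"
  by (subst sum_UNIV_single[where c = z]) (simp_all add: bvec_def)

lemma sum_bvec_times [simp]: "(\<Sum>y\<in>UNIV. bvec y x * h y) = (h (x::'v::finite) :: int)"
  by (subst sum_UNIV_single[where c = x]) (simp_all add: bvec_def)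

lemma ip_bvec_right: "ip h (bvec p) = h p"
  by (simp add: ip_def)

lemma dom_geq_refl: "dom_geq adj v v"
  by (auto simp: dom_geq_def st_def lk_def)

lemma dom_geq_trans:
  "(\<And>x y. adj x y \<Longrightarrow> adj y x) \<Longrightarrow> dom_geq adj v w \<Longrightarrow> dom_geq adj w u \<Longrightarrow> dom_geq adj v u"
  unfolding dom_geq_def st_def lk_def by blast

text \<open>\<open>C (bvec s) r\<close> is the \<open>(r, s)\<close> entry of the matrix of \<open>C\<close>.\<close>

definition matrix_map :: "(('v::finite \<Rightarrow> int) \<Rightarrow> ('v \<Rightarrow> int)) \<Rightarrow> bool" where
  "matrix_map C \<longleftrightarrow> (\<forall>h. C h = (\<lambda>x. \<Sum>y\<in>UNIV. C (bvec y) x * h y))"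

definition dom_triangular :: "('v \<Rightarrow> 'v \<Rightarrow> bool) \<Rightarrow> (('v::finite \<Rightarrow> int) \<Rightarrow> ('v \<Rightarrow> int)) \<Rightarrow> bool" where
  "dom_triangular adj C \<longleftrightarrow> matrix_map C \<and> (\<forall>r s. C (bvec s) r \<noteq> 0 \<longrightarrow> dom_geq adj r s)"

definition invertible_dom_triangular ::
  "('v \<Rightarrow> 'v \<Rightarrow> bool) \<Rightarrow> (('v::finite \<Rightarrow> int) \<Rightarrow> ('v \<Rightarrow> int)) \<Rightarrow> bool" where
  "invertible_dom_triangular adj C \<longleftrightarrow>
     dom_triangular adj C \<and> (\<exists>B. dom_triangular adj B \<and> (\<forall>h. B (C h) = h))"

lemma matrix_map_apply:
  assumes "matrix_map C"
  shows "C h x = (\<Sum>y\<in>UNIV. C (bvec y) x * h y)"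
proof -
  from assms have "C h = (\<lambda>x. \<Sum>y\<in>UNIV. C (bvec y) x * h y)"
    unfolding matrix_map_def by (rule spec)
  then show ?thesis by (rule fun_cong[THEN trans]) (rule refl)
qed

lemma matrix_map_comp:
  assumes C: "matrix_map C" and D: "matrix_map D"
  shows "matrix_map (C \<circ> D)"
  unfolding matrix_map_def
proof (intro allI ext)
  fix h x
  have "(C \<circ> D) h x = (\<Sum>y\<in>UNIV. C (bvec y) x * (\<Sum>z\<in>UNIV. D (bvec z) y * h z))"
    using matrix_map_apply[OF C, of "D h" x] matrix_map_apply[OF D, of h] by simp
  also have "\<dots> = (\<Sum>y\<in>UNIV. \<Sum>z\<in>UNIV. C (bvec y) x * D (bvec z) y * h z)"
    by (simp add: sum_distrib_left mult.assoc)
  also have "\<dots> = (\<Sum>z\<in>UNIV. (\<Sum>y\<in>UNIV. C (bvec y) x * D (bvec z) y) * h z)"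
    by (subst sum.swap) (simp add: sum_distrib_right)
  also have "\<dots> = (\<Sum>z\<in>UNIV. (C \<circ> D) (bvec z) x * h z)"
    unfolding comp_apply matrix_map_apply[OF C, of "D (bvec _)" x] ..
  finally show "(C \<circ> D) h x = (\<Sum>z\<in>UNIV. (C \<circ> D) (bvec z) x * h z)" .
qed

lemma dom_triangular_id: "dom_triangular adj id"
  by (simp add: dom_triangular_def matrix_map_def) (simp add: bvec_def dom_geq_refl)

lemma dom_triangular_comp:
  assumes sym: "\<And>x y. adj x y \<Longrightarrow> adj y x"
    and C: "dom_triangular adj C" and D: "dom_triangular adj D"
  shows "dom_triangular adj (C \<circ> D)"
proof -
  have CC: "matrix_map C" "\<And>r s. C (bvec s) r \<noteq> 0 \<Longrightarrow> dom_geq adj r s"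
    using C unfolding dom_triangular_def by simp_all
  have DD: "matrix_map D" "\<And>r s. D (bvec s) r \<noteq> 0 \<Longrightarrow> dom_geq adj r s"
    using D unfolding dom_triangular_def by simp_all
  have "dom_geq adj r s" if "(C \<circ> D) (bvec s) r \<noteq> 0" for r s
  proof -
    from that have "(\<Sum>y\<in>UNIV. C (bvec y) r * D (bvec s) y) \<noteq> 0"
      unfolding comp_apply matrix_map_apply[OF CC(1), of "D (bvec s)" r] .
    then obtain y where "C (bvec y) r * D (bvec s) y \<noteq> 0"
      by (rule sum.not_neutral_contains_not_neutral)
    then have "dom_geq adj r y" "dom_geq adj y s"
      using CC(2) DD(2) by simp_all
    then show ?thesis
      using dom_geq_trans[of adj, OF sym] by blast
  qed
  then show ?thesis
    unfolding dom_triangular_def using matrix_map_comp[OF CC(1) DD(1)] by blast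
qed

lemma invertible_dom_triangular_comp:
  assumes sym: "\<And>x y. adj x y \<Longrightarrow> adj y x"
    and "invertible_dom_triangular adj T" "invertible_dom_triangular adj C"
  shows "invertible_dom_triangular adj (T \<circ> C)"
proof -
  obtain T' where T: "dom_triangular adj T" "dom_triangular adj T'" "\<And>h. T' (T h) = h"
    using assms(2) unfolding invertible_dom_triangular_def by blast
  obtain C' where C: "dom_triangular adj C" "dom_triangular adj C'" "\<And>h. C' (C h) = h"
    using assms(3) unfolding invertible_dom_triangular_def by blast
  have "dom_triangular adj (T \<circ> C)" "dom_triangular adj (C' \<circ> T')"
    using T C by (simp_all add: dom_triangular_comp[OF sym])
  moreover have "(C' \<circ> T') ((T \<circ> C) h) = h" for h
    using T C by simp
  ultimately show ?thesis
    unfolding invertible_dom_triangular_def by blast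
qed

lemma dom_triangular_Etr:
  assumes "dom_geq adj p q"
  shows "dom_triangular adj (Etr p q)"
proof -
  have "matrix_map (Etr p q)"
    unfolding matrix_map_def Etr_def
    by (intro allI ext) (simp add: sum.distrib distrib_right)
  moreover have "Etr p q (bvec s) r \<noteq> 0 \<Longrightarrow> r = s \<or> (r = p \<and> s = q)" for r s
    by (auto simp: Etr_def bvec_def split: if_splits)
  ultimately show ?thesis
    using assms dom_geq_refl unfolding dom_triangular_def by metis
qed

lemma dom_triangular_Etr_inv:
  assumes "dom_geq adj p q"
  shows "dom_triangular adj (Etr_inv p q)"
proof -
  have "matrix_map (Etr_inv p q)"
    unfolding matrix_map_def Etr_inv_def
    by (intro allI ext) (simp add: sum_subtractf left_diff_distrib)
  moreover have "Etr_inv p q (bvec s) r \<noteq> 0 \<Longrightarrow> r = s \<or> (r = p \<and> s = q)" for r s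
    by (auto simp: Etr_inv_def bvec_def split: if_splits)
  ultimately show ?thesis
    using assms dom_geq_refl unfolding dom_triangular_def by metis
qed

lemma dom_triangular_Ninv: "dom_triangular adj (Ninv q)"
proof -
  have "matrix_map (Ninv q)"
    unfolding matrix_map_def Ninv_def
    by (intro allI ext) (simp add: sum_negf)
  then show ?thesis
    by (auto simp: dom_triangular_def Ninv_def bvec_def dom_geq_refl split: if_splits)
qed

lemma Etr_inv_Etr: "p \<noteq> q \<Longrightarrow> Etr_inv p q (Etr p q h) = h"
  by (auto simp: Etr_def Etr_inv_def)

lemma Etr_Etr_inv: "p \<noteq> q \<Longrightarrow> Etr p q (Etr_inv p q h) = h"
  by (auto simp: Etr_def Etr_inv_def)

lemma Ninv_Ninv: "Ninv q (Ninv q h) = h"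
  by (auto simp: Ninv_def)

lemma Ggrp_invertible_dom_triangular:
  assumes sym: "\<And>x y. adj x y \<Longrightarrow> adj y x" and "A \<in> Ggrp adj star a g"
  shows "invertible_dom_triangular adj A"
  using assms(2)
proof induction
  case G_id
  show ?case
    unfolding invertible_dom_triangular_def by (auto intro: dom_triangular_id)
next
  case (G_E A q p)
  have "invertible_dom_triangular adj (Etr p q)"
    unfolding invertible_dom_triangular_def using G_E.hyps
    by (metis Etr_inv_Etr dom_triangular_Etr dom_triangular_Etr_inv)
  from invertible_dom_triangular_comp[OF sym this G_E.IH] show ?case .
next
  case (G_Einv A q p)
  have "invertible_dom_triangular adj (Etr_inv p q)"
    unfolding invertible_dom_triangular_def using G_Einv.hyps
    by (metis Etr_Etr_inv dom_triangular_Etr dom_triangular_Etr_inv)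
  from invertible_dom_triangular_comp[OF sym this G_Einv.IH] show ?case .
next
  case (G_N A q)
  have "invertible_dom_triangular adj (Ninv q)"
    unfolding invertible_dom_triangular_def by (metis Ninv_Ninv dom_triangular_Ninv)
  from invertible_dom_triangular_comp[OF sym this G_N.IH] show ?case .
qed

lemma matrix_map_wedge:
  assumes "matrix_map A"
  shows "wedge (A l) (A l') x y =
    (\<Sum>z\<in>UNIV. \<Sum>w\<in>UNIV. A (bvec z) x * A (bvec w) y * wedge l l' z w)"
proof -
  have "(\<Sum>z\<in>UNIV. \<Sum>w\<in>UNIV. A (bvec z) x * A (bvec w) y * wedge l l' z w)
      = (\<Sum>z\<in>UNIV. \<Sum>w\<in>UNIV. (A (bvec z) x * l z) * (A (bvec w) y * l' w))
      - (\<Sum>z\<in>UNIV. \<Sum>w\<in>UNIV. (A (bvec z) x * l' z) * (A (bvec w) y * l w))"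
    by (simp add: wedge_def sum_subtractf algebra_simps)
  also have "\<dots> = A l x * A l' y - A l' x * A l y"
    by (simp only: sum_product matrix_map_apply[OF assms, of l] matrix_map_apply[OF assms, of l'])
  finally show ?thesis
    by (simp add: wedge_def mult.commute)
qed

lemma Qact_matrix_map:
  assumes "matrix_map A"
  shows "Qact adj star a g A x y =
    (\<Sum>z\<in>UNIV. \<Sum>w\<in>UNIV. A (bvec z) x * A (bvec w) y * Qform adj star a g z w)"
proof -
  let ?I = "{i. i < g \<and> adj (fst (a i)) (fst (star (a i)))}"
  have "(\<Sum>z\<in>UNIV. \<Sum>w\<in>UNIV. A (bvec z) x * A (bvec w) y * Qform adj star a g z w)
     = (\<Sum>z\<in>UNIV. \<Sum>w\<in>UNIV. \<Sum>i\<in>?I.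
          A (bvec z) x * A (bvec w) y * wedge (lvec (a i)) (lvec (star (a i))) z w)"
    by (simp add: Qform_def Qact_def sum_distrib_left)
  also have "\<dots> = (\<Sum>i\<in>?I. \<Sum>z\<in>UNIV. \<Sum>w\<in>UNIV.
          A (bvec z) x * A (bvec w) y * wedge (lvec (a i)) (lvec (star (a i))) z w)"
    by (simp only: sum.swap[where B = ?I])
  also have "\<dots> = Qact adj star a g A x y"
    by (simp only: Qact_def matrix_map_wedge[OF assms])
  finally show ?thesis ..
qed

lemma invariant_form_transpose:
  fixes A B :: "('v::finite \<Rightarrow> int) \<Rightarrow> 'v \<Rightarrow> int" and Q :: "'v \<Rightarrow> 'v \<Rightarrow> int"
  assumes B: "matrix_map B" and BA: "\<And>h. B (A h) = h"
    and invariant: "\<And>x y. (\<Sum>z\<in>UNIV. \<Sum>w\<in>UNIV. A (bvec z) x * A (bvec w) y * Q z w) = Q x y"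
  shows "(\<Sum>w\<in>UNIV. A (bvec w) y * Q u w) = (\<Sum>x\<in>UNIV. B (bvec x) u * Q x y)"
proof -
  have BA_entries: "(\<Sum>x\<in>UNIV. B (bvec x) u * A (bvec z) x) = bvec z u" for z
    using matrix_map_apply[OF B, of "A (bvec z)" u] BA by simp
  have "(\<Sum>x\<in>UNIV. B (bvec x) u * Q x y)
      = (\<Sum>x\<in>UNIV. B (bvec x) u * (\<Sum>z\<in>UNIV. \<Sum>w\<in>UNIV. A (bvec z) x * (A (bvec w) y * Q z w)))"
    using invariant by (simp add: mult.assoc)
  also have "\<dots> = (\<Sum>x\<in>UNIV. \<Sum>z\<in>UNIV. \<Sum>w\<in>UNIV. B (bvec x) u * A (bvec z) x * (A (bvec w) y * Q z w))"
    by (simp add: sum_distrib_left mult.assoc)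
  also have "\<dots> = (\<Sum>z\<in>UNIV. \<Sum>w\<in>UNIV. \<Sum>x\<in>UNIV. B (bvec x) u * A (bvec z) x * (A (bvec w) y * Q z w))"
    by (subst sum.swap) (rule sum.cong[OF refl], rule sum.swap)
  also have "\<dots> = (\<Sum>z\<in>UNIV. bvec z u * (\<Sum>w\<in>UNIV. A (bvec w) y * Q z w))"
    by (simp add: sum_distrib_right[symmetric] sum_distrib_left BA_entries)
  also have "\<dots> = (\<Sum>w\<in>UNIV. A (bvec w) y * Q u w)"
    by (rule sum_bvec_times)
  finally show ?thesis ..
qed

lemma vstar_fst:
  assumes star_star: "\<And>u. star (star u) = linv u"
  shows "vstar star (fst u) = fst (star u)"
proof (cases "snd u")
  case True
  then have "(fst u, True) = u" by (cases u) auto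
  then show ?thesis by (simp add: vstar_def)
next
  case False
  then have "(fst u, True) = star (star u)"
    by (cases u) (simp add: star_star linv_def)
  then have "vstar star (fst u) = fst (star (star (star u)))"
    by (simp only: vstar_def)
  also have "\<dots> = fst (star u)"
    by (simp only: star_star[of "star u"]) (simp add: linv_def)
  finally show ?thesis .
qed

lemma vstar_vstar:
  assumes star_star: "\<And>u. star (star u) = linv u"
  shows "vstar star (vstar star v) = v"
proof -
  have "vstar star (vstar star v) = fst (star (star (v, True)))"
    by (simp only: vstar_def[of star v] vstar_fst[OF star_star])
  also have "\<dots> = v"
    by (simp add: star_star linv_def)
  finally show ?thesis .
qed

lemma Qform_apply:
  "Qform adj star a g z w = (\<Sum>i | i < g \<and> adj (fst (a i)) (fst (star (a i))).
     lvec (a i) z * lvec (star (a i)) w - lvec (a i) w * lvec (star (a i)) z)"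
  by (simp add: Qform_def Qact_def wedge_def)

lemma Qform_antisym: "Qform adj star a g z w = - Qform adj star a g w z"
  by (simp add: Qform_apply sum_negf[symmetric])

lemma Qform_nonzero_imp_vstar:
  fixes a :: "nat \<Rightarrow> 'v letter"
  assumes star_star: "\<And>u. star (star u) = linv u"
    and "Qform adj star a g z w \<noteq> 0"
  shows "z = vstar star w"
proof -
  obtain i where "lvec (a i) z * lvec (star (a i)) w - lvec (a i) w * lvec (star (a i)) z \<noteq> 0"
    using assms(2) unfolding Qform_apply by (rule sum.not_neutral_contains_not_neutral)
  then have "(z = fst (a i) \<and> w = fst (star (a i))) \<or> (w = fst (a i) \<and> z = fst (star (a i)))"
    by (auto simp: lvec_def split: if_splits)
  moreover have "vstar star (fst (star (a i))) = fst (a i)"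
    using vstar_fst[OF star_star, of "star (a i)"] by (simp add: star_star linv_def)
  moreover have "vstar star (fst (a i)) = fst (star (a i))"
    by (rule vstar_fst[OF star_star])
  ultimately show ?thesis
    by auto
qed

lemma inj_on_disjoint_if_card_cover:
  fixes f h :: "nat \<Rightarrow> 'a"
  assumes "finite S" "card S = 2 * g" "f ` {..<g} \<union> h ` {..<g} = S"
  shows "inj_on f {..<g}" "f ` {..<g} \<inter> h ` {..<g} = {}"
proof -
  have "card (f ` {..<g}) \<le> g" "card (h ` {..<g}) \<le> g"
    using card_image_le[OF finite_lessThan] by simp_all
  moreover have "card (f ` {..<g}) + card (h ` {..<g})
      = card (f ` {..<g} \<union> h ` {..<g}) + card (f ` {..<g} \<inter> h ` {..<g})"
    by (rule card_Un_Int) simp_all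
  moreover have "card (f ` {..<g} \<union> h ` {..<g}) = 2 * g"
    using assms by simp
  ultimately have "card (f ` {..<g}) = g" "card (f ` {..<g} \<inter> h ` {..<g}) = 0"
    by linarith+
  then show "inj_on f {..<g}" "f ` {..<g} \<inter> h ` {..<g} = {}"
    by (simp_all add: eq_card_imp_inj_on)
qed

lemma Qform_pair_nonzero:
  fixes a :: "nat \<Rightarrow> 'v letter"
  assumes inj: "inj_on (\<lambda>i. fst (a i)) {..<g}"
    and disj: "(\<lambda>i. fst (a i)) ` {..<g} \<inter> (\<lambda>i. fst (star (a i))) ` {..<g} = {}"
    and i: "i < g" "adj (fst (a i)) (fst (star (a i)))"
  shows "Qform adj star a g (fst (a i)) (fst (star (a i))) \<noteq> 0"
proof -
  let ?x = "\<lambda>i. fst (a i)" and ?y = "\<lambda>i. fst (star (a i))"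
  have xy: "?x j \<noteq> ?y k" if "j < g" "k < g" for j k
    using disj that by blast
  let ?I = "{j. j < g \<and> adj (?x j) (?y j)}"
  let ?t = "\<lambda>j. lvec (a j) (?x i) * lvec (star (a j)) (?y i) - lvec (a j) (?y i) * lvec (star (a j)) (?x i)"
  have "Qform adj star a g (?x i) (?y i) = ?t i + sum ?t (?I - {i})"
    unfolding Qform_apply by (rule sum.remove) (simp_all add: i)
  also have "sum ?t (?I - {i}) = 0"
  proof (rule sum.neutral, rule ballI)
    fix j assume "j \<in> ?I - {i}"
    then have "?x j \<noteq> ?x i" "?x j \<noteq> ?y i"
      using inj i xy by (auto dest: inj_onD)
    then show "?t j = 0"
      by (simp add: lvec_def)
  qed
  moreover have "?x i \<noteq> ?y i"
    using xy i by blast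
  ultimately show ?thesis
    by (simp add: lvec_def)
qed

lemma Qform_vstar_nonzero:
  fixes a :: "nat \<Rightarrow> 'v::finite letter"
  assumes star_star: "\<And>u. star (star u) = linv u"
    and card_X: "card (UNIV :: 'v::finite set) = 2 * g"
    and a_cover: "(\<lambda>i. fst (a i)) ` {..<g} \<union> (\<lambda>i. fst (star (a i))) ` {..<g} = UNIV"
    and r: "r \<in> suppQ adj star a g"
  shows "Qform adj star a g (vstar star r) r \<noteq> 0"
proof -
  obtain i where i: "i < g" "adj (fst (a i)) (fst (star (a i)))"
    and "r = fst (a i) \<or> r = fst (star (a i))"
    using r unfolding suppQ_def by blast
  moreover have "Qform adj star a g (fst (a i)) (fst (star (a i))) \<noteq> 0"
    using inj_on_disjoint_if_card_cover[OF finite_UNIV card_X a_cover] i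
    by (rule Qform_pair_nonzero)
  ultimately show ?thesis
    using Qform_antisym vstar_fst[OF star_star] vstar_vstar[OF star_star]
    by (metis neg_equal_0_iff_equal)
qed

theorem lemma4p7:
  fixes adj :: "'v::finite \<Rightarrow> 'v \<Rightarrow> bool"
    and star :: "'v letter \<Rightarrow> 'v letter"
    and a :: "nat \<Rightarrow> 'v letter"
    and g :: nat
    and A :: "('v \<Rightarrow> int) \<Rightarrow> ('v \<Rightarrow> int)"
    and p q :: 'v
  assumes adj_sym: "\<And>x y. adj x y \<Longrightarrow> adj y x"
    and adj_irrefl: "\<And>x. \<not> adj x x"
    and card_X: "card (UNIV :: 'v set) = 2 * g"
    and star_bij: "bij star"
    and star_star: "\<And>u. star (star u) = linv u"
    and a_cover: "(\<lambda>i. fst (a i)) ` {..<g} \<union> (\<lambda>i. fst (star (a i))) ` {..<g} = UNIV"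
    and Q_nonzero: "Qform adj star a g \<noteq> (\<lambda>x y. 0)"
    and A_in_G: "A \<in> Ggrp adj star a g"
    and A_fixes_Q: "Qact adj star a g A = Qform adj star a g"
    and p_supp: "p \<in> suppQ adj star a g"
    and q_supp: "q \<in> suppQ adj star a g"
    and nonzero: "ip (A (bvec q)) (bvec p) \<noteq> 0"
  shows "p = q \<or> Qdom adj star p q"
proof -
  let ?Q = "Qform adj star a g" and ?v = "vstar star"
  obtain B where A: "dom_triangular adj A" and B: "dom_triangular adj B" and BA: "\<And>h. B (A h) = h"
    using Ggrp_invertible_dom_triangular[OF adj_sym A_in_G]
    unfolding invertible_dom_triangular_def by blast
  have "(\<Sum>w\<in>UNIV. A (bvec w) p * ?Q (?v q) w) = (\<Sum>x\<in>UNIV. B (bvec x) (?v q) * ?Q x p)"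
    using A B BA A_fixes_Q
    by (intro invariant_form_transpose) (simp_all add: dom_triangular_def Qact_matrix_map[symmetric])
  moreover have "?Q (?v q) w = 0" if "w \<noteq> q" for w
    using that Qform_nonzero_imp_vstar[OF star_star, of adj a g "?v q" w] vstar_vstar[OF star_star]
    by metis
  moreover have "?Q x p = 0" if "x \<noteq> ?v p" for x
    using that Qform_nonzero_imp_vstar[OF star_star] by blast
  ultimately have "A (bvec q) p * ?Q (?v q) q = B (bvec (?v p)) (?v q) * ?Q (?v p) p"
    by (simp add: sum_UNIV_single[where c = q] sum_UNIV_single[where c = "?v p"])
  moreover have "A (bvec q) p \<noteq> 0"
    using nonzero by (simp add: ip_bvec_right)
  moreover have "?Q (?v q) q \<noteq> 0"
    using Qform_vstar_nonzero[OF star_star card_X a_cover q_supp] .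
  ultimately have "B (bvec (?v p)) (?v q) \<noteq> 0"
    by auto
  then have "dom_geq adj p q" "dom_geq adj (?v q) (?v p)"
    using A B \<open>A (bvec q) p \<noteq> 0\<close> unfolding dom_triangular_def by blast+
  then show ?thesis
    unfolding Qdom_def by blast
qed

end
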